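(* Let $H$ be a $3$-tournament on $n$ vertices and let $C=v_1b_1v_2b_2\dots v_nb_nv_1$ be a Hamiltonian cycle of $H$. Then every pair $\{v_i,v_j\}$ of vertices that are not consecutive on $C$ (i.e. $j\not\equiv i\pm 1 \pmod n$) is contained in the vertex sets of at most four of the hyperarcs $b_1,\dots,b_n$. Moreover: (a) if $n=8$, there are at most two non-consecutive pairs each contained in four hyperarcs of $C$; (b) if $n=7$, there are no two non-consecutive pairs each contained in four hyperarcs of $C$, and there are at most two non-consecutive pairs each contained in at least three hyperarcs of $C$; furthermore, if there is one non-consecutive pair contained in four hyperarcs of $C$ and another contained in three hyperarcs of $C$, then every other non-consecutive pair is contained in at most one hyperarc of $C$.
   Context: For $2\le k\le n$, a $k$-tournament $H$ on $n$ vertices is a pair $(V,A)$ where $V$ is a set of $n$ vertices and $A$ is a set of $k$-tuples of distinct vertices (hyperarcs) such that for every $k$-subset $S\subseteq V$, $A$ contains exactly one of the $k!$ orderings of $S$. For a hyperarc $a=(x_1x_2\dots x_k)$ we say $x_i$ precedes $x_j$ (written $x_i a x_j$) if $i<j$. A cycle of length $m$ in $H$ is an alternating sequence $x_1a_1x_2a_2\dots x_ma_mx_1$ of distinct vertices $x_i$ and distinct hyperarcs $a_j$ such that $x_i a_i x_{i+1}$ for all $i$ (indices mod $m$); it is Hamiltonian if it contains all vertices. A pair of vertices is contained in a hyperarc if both vertices belong to the vertex set of that hyperarc; "hyperarcs of $C$" means $b_1,\dots,b_n$. *)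

theory Defs
  imports Main
begin

definition k_tournament :: "nat \<Rightarrow> 'a set \<Rightarrow> 'a list set \<Rightarrow> bool" where
  "k_tournament k V A \<longleftrightarrow> finite V \<and> 2 \<le> k \<and> k \<le> card V \<and>
     (\<forall>a\<in>A. distinct a \<and> length a = k \<and> set a \<subseteq> V) \<and>
     (\<forall>S. S \<subseteq> V \<and> card S = k \<longrightarrow> (\<exists>!a. a \<in> A \<and> set a = S))"

definition precedes :: "'a \<Rightarrow> 'a list \<Rightarrow> 'a \<Rightarrow> bool" where
  "precedes x a y \<longleftrightarrow> (\<exists>p q. p < q \<and> q < length a \<and> a ! p = x \<and> a ! q = y)"

text \<open>Hamiltonian cycle v_0 b_0 v_1 b_1 ... v_(n-1) b_(n-1) v_0 (indices mod n, n = card V).\<close>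
definition ham_cycle :: "'a set \<Rightarrow> 'a list set \<Rightarrow> (nat \<Rightarrow> 'a) \<Rightarrow> (nat \<Rightarrow> 'a list) \<Rightarrow> bool" where
  "ham_cycle V A v b \<longleftrightarrow>
     (let n = card V in
       inj_on v {..<n} \<and> v ` {..<n} = V \<and>
       inj_on b {..<n} \<and> b ` {..<n} \<subseteq> A \<and>
       (\<forall>i<n. precedes (v i) (b i) (v (Suc i mod n))))"

definition arc_count :: "nat \<Rightarrow> (nat \<Rightarrow> 'a list) \<Rightarrow> 'a set \<Rightarrow> nat" where
  "arc_count n b P = card {t. t < n \<and> P \<subseteq> set (b t)}"

definition nonconsec_pairs :: "nat \<Rightarrow> (nat \<Rightarrow> 'a) \<Rightarrow> 'a set set" where
  "nonconsec_pairs n v = {{v i, v j} | i j. i < n \<and> j < n \<and> i \<noteq> j \<and>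
       j \<noteq> Suc i mod n \<and> i \<noteq> Suc j mod n}"

end

theory Submission
  imports Defs
begin

(* Write the hyperarc b_t as its cycle edge {v_t, v_(t+1)} plus an apex a_t. Apart from its
   cycle edge, b_t contains a pair {x, y} only if x lies on that edge and a_t = y, or vice
   versa; every vertex lies on exactly two cycle edges, so a non-consecutive pair lies in at
   most 2 + 2 hyperarcs, and a pair lying in four of them has both endpoints' edges pointing
   at the other endpoint. Since distinct hyperarcs have distinct vertex sets, disjoint pairs
   share no hyperarc and distinct pairs share at most one. Two pairs lying in four hyperarcs
   each are therefore disjoint and use 8 of the n hyperarcs, three use 12; for n = 7 the
   remaining statements follow from the same counting, refined by the apex counts at a
   common endpoint. *)

lemma card_le_1I:
  assumes "\<And>x y. x \<in> X \<Longrightarrow> y \<in> X \<Longrightarrow> x \<noteq> y \<Longrightarrow> False"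
  shows "card X \<le> 1"
proof (rule ccontr)
  assume "\<not> card X \<le> 1"
  then obtain T where "T \<subseteq> X" "card T = 2"
    by (metis obtain_subset_with_card_n not_le Suc_leI one_add_one plus_1_eq_Suc)
  then show False
    using assms by (auto simp: card_2_iff)
qed

lemma card_le_2I:
  assumes "\<And>x y z. x \<in> X \<Longrightarrow> y \<in> X \<Longrightarrow> z \<in> X \<Longrightarrow> x \<noteq> y \<Longrightarrow> x \<noteq> z \<Longrightarrow> y \<noteq> z \<Longrightarrow> False"
  shows "card X \<le> 2"
proof (rule ccontr)
  assume "\<not> card X \<le> 2"
  then obtain T where "T \<subseteq> X" "card T = 3"
    by (metis obtain_subset_with_card_n not_le Suc_leI numeral_2_eq_2 numeral_3_eq_3)
  then show False
    using assms by (auto simp: card_3_iff)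
qed

lemma card_3_obtain_third:
  assumes "card S = 3" "x \<in> S" "y \<in> S" "x \<noteq> y"
  obtains z where "z \<notin> {x, y}" "S = {x, y, z}"
proof -
  have "finite S"
    using assms(1) card.infinite by fastforce
  then have "card (S - {x, y}) = 1"
    using assms by (simp add: card_Diff_subset)
  then obtain z where "S - {x, y} = {z}"
    by (auto simp: card_1_singleton_iff)
  then show thesis
    using that assms by blast
qed

lemma card_Un_disjoint_le:
  fixes n :: nat
  assumes "X \<union> Y \<subseteq> {..<n}" "X \<inter> Y = {}"
  shows "card X + card Y \<le> n"
proof -
  have "finite X" "finite Y"
    using assms(1) finite_subset by blast+
  then have "card X + card Y = card (X \<union> Y)"
    using assms(2) by (simp add: card_Un_disjoint)
  also have "\<dots> \<le> n"
    using card_mono[OF finite_lessThan assms(1)] by simp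
  finally show ?thesis .
qed

lemma inj_on_Suc_mod: "inj_on (\<lambda>t. Suc t mod n) {..<n}"
  by (auto simp: inj_on_def mod_Suc split: if_splits)

(* arc t is the vertex set of b_t. A chord (a non-consecutive pair) is called full if it lies
   in four arcs and heavy if it lies in at least three. *)
locale hamiltonian_arc_cycle =
  fixes n :: nat and v :: "nat \<Rightarrow> 'a" and apex :: "nat \<Rightarrow> 'a" and arc :: "nat \<Rightarrow> 'a set"
  assumes n_pos: "0 < n"
    and inj_v: "inj_on v {..<n}"
    and arc_eq: "t < n \<Longrightarrow> arc t = {v t, v (Suc t mod n), apex t}"
    and apex_off_edge: "t < n \<Longrightarrow> apex t \<noteq> v t \<and> apex t \<noteq> v (Suc t mod n)"
    and inj_arc: "inj_on arc {..<n}"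
begin

definition covering_arcs :: "'a set \<Rightarrow> nat set" where
  "covering_arcs P = {t. t < n \<and> P \<subseteq> arc t}"

definition edge_arcs :: "'a \<Rightarrow> nat set" where
  "edge_arcs x = {t. t < n \<and> x \<in> {v t, v (Suc t mod n)}}"

definition apex_count :: "'a \<Rightarrow> 'a \<Rightarrow> nat" where
  "apex_count x y = card {t \<in> edge_arcs x. apex t = y}"

definition chord :: "'a set \<Rightarrow> bool" where
  "chord P \<longleftrightarrow> card P = 2 \<and> (\<forall>t<n. P \<noteq> {v t, v (Suc t mod n)})"

lemma covering_arcs_subset: "covering_arcs P \<subseteq> {..<n}"
  by (auto simp: covering_arcs_def)

lemma finite_covering_arcs: "finite (covering_arcs P)"
  using covering_arcs_subset finite_subset by blast

lemma card_edge_arcs_le: "card (edge_arcs x) \<le> 2"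
proof -
  have "inj_on v ((\<lambda>t. Suc t mod n) ` {..<n})"
    using inj_v by (rule inj_on_subset) (auto simp: n_pos)
  then have inj_succ: "inj_on (v \<circ> (\<lambda>t. Suc t mod n)) {..<n}"
    by (rule comp_inj_on[OF inj_on_Suc_mod])
  have "edge_arcs x = (v -` {x} \<inter> {..<n}) \<union> ((v \<circ> (\<lambda>t. Suc t mod n)) -` {x} \<inter> {..<n})"
    by (auto simp: edge_arcs_def)
  then have "card (edge_arcs x) \<le> card (v -` {x} \<inter> {..<n}) + card ((v \<circ> (\<lambda>t. Suc t mod n)) -` {x} \<inter> {..<n})"
    by (simp add: card_Un_le)
  also have "\<dots> \<le> 2"
    using card_vimage_inj_on_le[OF inj_v, of "{x}"] card_vimage_inj_on_le[OF inj_succ, of "{x}"]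
    by simp
  finally show ?thesis .
qed

lemma sum_apex_count_le:
  assumes "finite Y"
  shows "(\<Sum>y\<in>Y. apex_count x y) \<le> 2"
proof -
  have "(\<Sum>y\<in>Y. apex_count x y) = card (\<Union>y\<in>Y. {t \<in> edge_arcs x. apex t = y})"
    unfolding apex_count_def using assms by (subst card_UN_disjoint) (auto simp: edge_arcs_def)
  also have "\<dots> \<le> card (edge_arcs x)"
    by (rule card_mono) (auto simp: edge_arcs_def)
  finally show ?thesis
    using card_edge_arcs_le[of x] by linarith
qed

lemma apex_count_le: "apex_count x y \<le> 2"
  using sum_apex_count_le[of "{y}" x] by simp

lemma apex_count_add_le: "y \<noteq> z \<Longrightarrow> apex_count x y + apex_count x z \<le> 2"
  using sum_apex_count_le[of "{y, z}" x] by simp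

lemma chord_doubleton: "chord P \<Longrightarrow> x \<in> P \<Longrightarrow> \<exists>y. P = {x, y} \<and> x \<noteq> y"
  by (auto simp: chord_def card_2_iff)

lemma chord_distinct: "chord {x, y} \<Longrightarrow> x \<noteq> y"
  by (auto simp: chord_def)

(* The two vertices of an arc other than its apex form a cycle edge, so one endpoint of a
   chord inside an arc is its apex. *)
lemma covering_arcs_chord:
  assumes "chord {x, y}"
  shows "covering_arcs {x, y} = {t \<in> edge_arcs x. apex t = y} \<union> {t \<in> edge_arcs y. apex t = x}"
  using assms apex_off_edge
  by (auto simp: covering_arcs_def edge_arcs_def chord_def arc_eq doubleton_eq_iff)

lemma card_covering_arcs_chord:
  assumes "chord {x, y}"
  shows "card (covering_arcs {x, y}) = apex_count x y + apex_count y x"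
  unfolding covering_arcs_chord[OF assms] apex_count_def
  using chord_distinct[OF assms] by (subst card_Un_disjoint) (auto simp: edge_arcs_def)

lemma card_covering_arcs_chord_le:
  assumes "chord P"
  shows "card (covering_arcs P) \<le> 4"
proof -
  obtain x y where "P = {x, y}"
    using assms by (auto simp: chord_def card_2_iff)
  then show ?thesis
    using assms card_covering_arcs_chord apex_count_le[of x y] apex_count_le[of y x] by simp
qed

lemma apex_mem_chord: "chord P \<Longrightarrow> t \<in> covering_arcs P \<Longrightarrow> apex t \<in> P"
  by (auto simp: chord_def card_2_iff covering_arcs_chord)

lemma finite_arc: "t < n \<Longrightarrow> finite (arc t)"
  by (simp add: arc_eq)

lemma card_arc_le: "t < n \<Longrightarrow> card (arc t) \<le> 3"
  by (simp add: arc_eq card_insert_le_m1)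

lemma card_le_card_arc: "t \<in> covering_arcs P \<Longrightarrow> card P \<le> card (arc t)"
  unfolding covering_arcs_def using card_mono finite_arc by blast

lemma card_covering_arcs_le_1:
  assumes "3 \<le> card P"
  shows "card (covering_arcs P) \<le> 1"
proof (rule card_le_1I)
  fix s t
  assume st: "s \<in> covering_arcs P" "t \<in> covering_arcs P" "s \<noteq> t"
  have "arc u = P" if "u \<in> covering_arcs P" for u
  proof -
    have "u < n" "P \<subseteq> arc u"
      using that by (auto simp: covering_arcs_def)
    then show ?thesis
      using assms card_le_card_arc[OF that] card_arc_le[of u] card_seteq[OF finite_arc]
      by (metis le_antisym le_trans)
  qed
  then have "arc s = arc t"
    using st by simp
  then show False
    using st inj_arc by (auto simp: covering_arcs_def dest: inj_onD)
qed

lemma covering_arcs_Un: "covering_arcs (P \<union> Q) = covering_arcs P \<inter> covering_arcs Q"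
  by (auto simp: covering_arcs_def)

lemma covering_arcs_eq_empty: "3 < card P \<Longrightarrow> covering_arcs P = {}"
proof (rule equals0I)
  fix t
  assume "3 < card P" and t: "t \<in> covering_arcs P"
  then have "t < n"
    by (simp add: covering_arcs_def)
  then show False
    using card_le_card_arc[OF t] card_arc_le \<open>3 < card P\<close> by (meson le_trans not_le)
qed

lemma finite_chord: "chord P \<Longrightarrow> finite P"
  by (auto simp: chord_def card_2_iff)

lemma distinct_chords_share_le_1_arc:
  assumes "chord P" "chord Q" "P \<noteq> Q"
  shows "card (covering_arcs P \<inter> covering_arcs Q) \<le> 1"
proof -
  have "\<not> Q \<subseteq> P"
    using assms card_subset_eq[OF finite_chord[OF assms(1)]] by (auto simp: chord_def)
  then have "card P < card (P \<union> Q)"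
    using assms by (intro psubset_card_mono) (auto simp: finite_chord)
  then have "3 \<le> card (P \<union> Q)"
    using assms(1) by (simp add: chord_def)
  then show ?thesis
    by (metis card_covering_arcs_le_1 covering_arcs_Un)
qed

lemma disjoint_chords_share_no_arc:
  assumes "chord P" "chord Q" "P \<inter> Q = {}"
  shows "covering_arcs P \<inter> covering_arcs Q = {}"
proof -
  have "card (P \<union> Q) = 4"
    using assms by (simp add: card_Un_disjoint finite_chord chord_def)
  then show ?thesis
    by (simp add: covering_arcs_eq_empty flip: covering_arcs_Un)
qed

lemma apex_count_ge_1_if_heavy:
  "chord {x, y} \<Longrightarrow> 3 \<le> card (covering_arcs {x, y}) \<Longrightarrow> 1 \<le> apex_count x y"
  using card_covering_arcs_chord apex_count_le[of y x] by fastforce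

lemma apex_count_eq_2_if_full:
  "chord {x, y} \<Longrightarrow> card (covering_arcs {x, y}) = 4 \<Longrightarrow> apex_count x y = 2"
  using card_covering_arcs_chord apex_count_le[of x y] apex_count_le[of y x] by fastforce

lemma apex_count_eq_0_if_full:
  "chord {x, y} \<Longrightarrow> card (covering_arcs {x, y}) = 4 \<Longrightarrow> z \<noteq> y \<Longrightarrow> apex_count x z = 0"
  using apex_count_eq_2_if_full apex_count_add_le[of y z x] by fastforce

lemma full_chord_disjoint:
  assumes "chord P" "card (covering_arcs P) = 4" "chord Q" "3 \<le> card (covering_arcs Q)" "P \<noteq> Q"
  shows "P \<inter> Q = {}"
proof (rule ccontr)
  assume "P \<inter> Q \<noteq> {}"
  then obtain u where "u \<in> P" "u \<in> Q"
    by blast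
  then obtain p q where P: "P = {u, p}" and Q: "Q = {u, q}"
    using assms chord_doubleton by metis
  then have "apex_count u q = 0"
    using assms apex_count_eq_0_if_full[of u p q] by auto
  moreover have "1 \<le> apex_count u q"
    using assms Q apex_count_ge_1_if_heavy by blast
  ultimately show False
    by simp
qed

lemma heavy_chords_at_vertex:
  assumes "chord {u, a}" "chord {u, b}" "a \<noteq> b"
    and "3 \<le> card (covering_arcs {u, a})" "3 \<le> card (covering_arcs {u, b})"
  shows "apex_count u a = 1" "apex_count a u = 2"
proof -
  show "apex_count u a = 1"
    using apex_count_ge_1_if_heavy[OF assms(1,4)] apex_count_ge_1_if_heavy[OF assms(2,5)]
      apex_count_add_le[OF assms(3), of u] by linarith
  then show "apex_count a u = 2"
    using assms card_covering_arcs_chord apex_count_le[of a u] by fastforce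
qed

lemma heavy_chord_avoids_star:
  assumes "chord {u, a}" "chord {u, b}" "a \<noteq> b"
    and "3 \<le> card (covering_arcs {u, a})" "3 \<le> card (covering_arcs {u, b})"
    and "chord R" "3 \<le> card (covering_arcs R)" "R \<noteq> {u, a}" "R \<noteq> {u, b}"
  shows "R \<inter> {u, a, b} = {}"
proof -
  have "u \<notin> R"
  proof
    assume "u \<in> R"
    then obtain d where R: "R = {u, d}"
      using assms chord_doubleton by blast
    then have "d \<noteq> a" "d \<noteq> b" "d \<noteq> u"
      using assms chord_distinct by auto
    then have "apex_count u a + apex_count u b + apex_count u d \<le> 2"
      using sum_apex_count_le[of "{a, b, d}" u] \<open>a \<noteq> b\<close> by simp
    then show False
      using assms R apex_count_ge_1_if_heavy[of u a] apex_count_ge_1_if_heavy[of u b]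
        apex_count_ge_1_if_heavy[of u d] by simp
  qed
  have partner_notin: "a' \<notin> R"
    if "chord {u, a'}" "chord {u, b'}" "a' \<noteq> b'" "3 \<le> card (covering_arcs {u, a'})"
      "3 \<le> card (covering_arcs {u, b'})" "R \<noteq> {u, a'}" for a' b'
  proof
    assume "a' \<in> R"
    then obtain d where R: "R = {a', d}"
      using assms chord_doubleton by blast
    then have "d \<noteq> u"
      using that by (auto simp: insert_commute)
    have "apex_count u a' = 1"
      using heavy_chords_at_vertex(1)[OF that(1-5)] .
    moreover have "apex_count u a' = 2"
      using heavy_chords_at_vertex(2)[of a' u d] that assms R \<open>d \<noteq> u\<close>
      by (simp add: insert_commute)
    ultimately show False
      by simp
  qed
  show ?thesis
    using \<open>u \<notin> R\<close> partner_notin[of a b] partner_notin[of b a] assms by auto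
qed

lemma two_full_chords:
  assumes "chord P" "chord Q" "P \<noteq> Q" "card (covering_arcs P) = 4" "card (covering_arcs Q) = 4"
  shows "8 \<le> n"
proof -
  have "covering_arcs P \<inter> covering_arcs Q = {}"
    using assms full_chord_disjoint disjoint_chords_share_no_arc by simp
  then show ?thesis
    using card_Un_disjoint_le[of "covering_arcs P" "covering_arcs Q" n] covering_arcs_subset assms
    by simp
qed

lemma three_full_chords:
  assumes "chord P" "chord Q" "chord R" "P \<noteq> Q" "P \<noteq> R" "Q \<noteq> R"
    and "card (covering_arcs P) = 4" "card (covering_arcs Q) = 4" "card (covering_arcs R) = 4"
  shows "12 \<le> n"
proof -
  have PQ: "covering_arcs P \<inter> covering_arcs Q = {}"
    using assms full_chord_disjoint disjoint_chords_share_no_arc by simp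
  have "covering_arcs P \<inter> covering_arcs R = {}" "covering_arcs Q \<inter> covering_arcs R = {}"
    using assms full_chord_disjoint disjoint_chords_share_no_arc by simp_all
  then have "(covering_arcs P \<union> covering_arcs Q) \<inter> covering_arcs R = {}"
    by blast
  moreover have "card (covering_arcs P \<union> covering_arcs Q) = 8"
    using PQ assms by (simp add: card_Un_disjoint finite_covering_arcs)
  ultimately show ?thesis
    using card_Un_disjoint_le[of "covering_arcs P \<union> covering_arcs Q" "covering_arcs R" n]
      covering_arcs_subset assms by simp
qed

lemma three_heavy_chords_sharing_vertex:
  assumes "chord P" "chord Q" "chord R" "P \<noteq> Q" "P \<noteq> R" "Q \<noteq> R" "P \<inter> Q \<noteq> {}"
    and "3 \<le> card (covering_arcs P)" "3 \<le> card (covering_arcs Q)" "3 \<le> card (covering_arcs R)"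
  shows "8 \<le> n"
proof -
  obtain u where "u \<in> P" "u \<in> Q"
    using assms(7) by blast
  then obtain a b where P: "P = {u, a}" and Q: "Q = {u, b}"
    using assms(1,2) chord_doubleton by metis
  with \<open>P \<noteq> Q\<close> have "a \<noteq> b"
    by auto
  then have "R \<inter> {u, a, b} = {}"
    using heavy_chord_avoids_star[of u a b R] assms P Q by simp
  then have "covering_arcs P \<inter> covering_arcs R = {}" "covering_arcs Q \<inter> covering_arcs R = {}"
    using disjoint_chords_share_no_arc[of P R] disjoint_chords_share_no_arc[of Q R] assms P Q
    by auto
  then have "(covering_arcs P \<union> covering_arcs Q) \<inter> covering_arcs R = {}"
    by blast
  moreover have "card (covering_arcs P \<inter> covering_arcs Q) \<le> 1"
    using distinct_chords_share_le_1_arc[OF assms(1,2,4)] .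
  then have "5 \<le> card (covering_arcs P \<union> covering_arcs Q)"
    using assms card_Un_Int[OF finite_covering_arcs finite_covering_arcs, of P Q] by linarith
  ultimately show ?thesis
    using card_Un_disjoint_le[of "covering_arcs P \<union> covering_arcs Q" "covering_arcs R" n]
      covering_arcs_subset assms(10) by simp
qed

lemma three_heavy_chords:
  assumes "chord P" "chord Q" "chord R" "P \<noteq> Q" "P \<noteq> R" "Q \<noteq> R"
    and "3 \<le> card (covering_arcs P)" "3 \<le> card (covering_arcs Q)" "3 \<le> card (covering_arcs R)"
  shows "8 \<le> n"
proof (cases "P \<inter> Q = {} \<and> P \<inter> R = {} \<and> Q \<inter> R = {}")
  case True
  then have "covering_arcs P \<inter> covering_arcs Q = {}"
    "(covering_arcs P \<union> covering_arcs Q) \<inter> covering_arcs R = {}"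
    using disjoint_chords_share_no_arc[of P Q] disjoint_chords_share_no_arc[of P R]
      disjoint_chords_share_no_arc[of Q R] assms by auto
  then have "6 \<le> card (covering_arcs P \<union> covering_arcs Q)"
    using assms by (simp add: card_Un_disjoint finite_covering_arcs)
  with \<open>(covering_arcs P \<union> covering_arcs Q) \<inter> covering_arcs R = {}\<close> show ?thesis
    using card_Un_disjoint_le[of "covering_arcs P \<union> covering_arcs Q" "covering_arcs R" n]
      covering_arcs_subset assms(9) by simp
next
  case False
  then consider "P \<inter> Q \<noteq> {}" | "P \<inter> R \<noteq> {}" | "Q \<inter> R \<noteq> {}"
    by blast
  then show ?thesis
  proof cases
    case 1
    then show ?thesis
      using three_heavy_chords_sharing_vertex[of P Q R] assms by simp
  next
    case 2
    then show ?thesis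
      using three_heavy_chords_sharing_vertex[of P R Q] assms by (simp add: eq_commute)
  next
    case 3
    then show ?thesis
      using three_heavy_chords_sharing_vertex[of Q R P] assms by (simp add: eq_commute)
  qed
qed

lemma full_chord_and_chord_of_three:
  assumes "chord P" "card (covering_arcs P) = 4" "chord Q" "card (covering_arcs Q) = 3"
    and "chord R" "R \<noteq> P" "R \<noteq> Q" "2 \<le> card (covering_arcs R)"
  shows "8 \<le> n"
(* For n < 8 the 4 + 3 arcs over P and Q are all arcs; a chord meeting P in c needs the two
   arcs with apex c on the edges at its other end, and these lie over P. *)
proof (rule ccontr)
  assume "\<not> 8 \<le> n"
  have "P \<inter> Q = {}"
    using assms full_chord_disjoint[of P Q] by fastforce
  then have "card (covering_arcs P \<union> covering_arcs Q) = 7"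
    using assms disjoint_chords_share_no_arc[of P Q]
    by (simp add: card_Un_disjoint finite_covering_arcs)
  with \<open>\<not> 8 \<le> n\<close> have all_arcs: "covering_arcs P \<union> covering_arcs Q = {..<n}"
    using covering_arcs_subset by (intro card_seteq) auto
  show False
  proof (cases "P \<inter> R = {}")
    case True
    then have "covering_arcs R \<subseteq> covering_arcs Q"
      using assms all_arcs covering_arcs_subset[of R] disjoint_chords_share_no_arc[of P R] by blast
    then show False
      using assms distinct_chords_share_le_1_arc[of Q R] by (simp add: Int_absorb1)
  next
    case False
    then obtain c where "c \<in> P" "c \<in> R"
      by blast
    then obtain p d where P: "P = {c, p}" and R: "R = {c, d}"
      using assms chord_doubleton by metis
    define T where "T = {t \<in> edge_arcs d. apex t = c}"
    have "apex_count c d = 0"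
      using assms P R apex_count_eq_0_if_full[of c p d] by auto
    then have "2 \<le> card T"
      using assms R card_covering_arcs_chord[of c d] by (simp add: T_def apex_count_def)
    have "T \<subseteq> covering_arcs R"
      using assms R covering_arcs_chord[of d c] by (auto simp: T_def insert_commute)
    moreover have "T \<inter> covering_arcs Q = {}"
      using assms apex_mem_chord[of Q] \<open>c \<in> P\<close> \<open>P \<inter> Q = {}\<close> by (auto simp: T_def)
    then have "T \<subseteq> covering_arcs P"
      using all_arcs by (auto simp: T_def edge_arcs_def)
    ultimately have "card T \<le> card (covering_arcs P \<inter> covering_arcs R)"
      by (intro card_mono) (auto simp: finite_covering_arcs)
    then show False
      using \<open>2 \<le> card T\<close> assms distinct_chords_share_le_1_arc[of P R] by simp
  qed
qed

lemma card_full_chords_le_2: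
  assumes "\<And>P. P \<in> C \<Longrightarrow> chord P" "n < 12"
  shows "card {P \<in> C. card (covering_arcs P) = 4} \<le> 2"
proof (rule card_le_2I)
  fix P Q R
  assume "P \<in> {P \<in> C. card (covering_arcs P) = 4}" "Q \<in> {P \<in> C. card (covering_arcs P) = 4}"
    "R \<in> {P \<in> C. card (covering_arcs P) = 4}" "P \<noteq> Q" "P \<noteq> R" "Q \<noteq> R"
  then show False
    using assms three_full_chords[of P Q R] by simp
qed

lemma card_full_chords_le_1:
  assumes "\<And>P. P \<in> C \<Longrightarrow> chord P" "n < 8"
  shows "card {P \<in> C. card (covering_arcs P) = 4} \<le> 1"
proof (rule card_le_1I)
  fix P Q
  assume "P \<in> {P \<in> C. card (covering_arcs P) = 4}" "Q \<in> {P \<in> C. card (covering_arcs P) = 4}"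
    "P \<noteq> Q"
  then show False
    using assms two_full_chords[of P Q] by simp
qed

lemma card_heavy_chords_le_2:
  assumes "\<And>P. P \<in> C \<Longrightarrow> chord P" "n < 8"
  shows "card {P \<in> C. 3 \<le> card (covering_arcs P)} \<le> 2"
proof (rule card_le_2I)
  fix P Q R
  assume "P \<in> {P \<in> C. 3 \<le> card (covering_arcs P)}" "Q \<in> {P \<in> C. 3 \<le> card (covering_arcs P)}"
    "R \<in> {P \<in> C. 3 \<le> card (covering_arcs P)}" "P \<noteq> Q" "P \<noteq> R" "Q \<noteq> R"
  then show False
    using assms three_heavy_chords[of P Q R] by simp
qed

lemma nonconsec_pair_chord:
  assumes "P \<in> nonconsec_pairs n v"
  shows "chord P"
proof -
  obtain i j where P: "P = {v i, v j}" and ij: "i < n" "j < n" "i \<noteq> j"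
    and nonadjacent: "j \<noteq> Suc i mod n" "i \<noteq> Suc j mod n"
    using assms by (auto simp: nonconsec_pairs_def)
  have v_eq_iff: "v k = v l \<longleftrightarrow> k = l" if "k < n" "l < n" for k l
    using inj_v that by (auto dest: inj_onD)
  have "card P = 2"
    using P ij v_eq_iff by simp
  moreover have "P \<noteq> {v t, v (Suc t mod n)}" if "t < n" for t
  proof
    assume "P = {v t, v (Suc t mod n)}"
    moreover have "Suc t mod n < n"
      using n_pos by simp
    ultimately have "(i = t \<and> j = Suc t mod n) \<or> (i = Suc t mod n \<and> j = t)"
      using P ij that v_eq_iff by (metis doubleton_eq_iff)
    then show False
      using nonadjacent by auto
  qed
  ultimately show ?thesis
    by (simp add: chord_def)
qed

end

lemma precedes_mem: "precedes x a y \<Longrightarrow> x \<in> set a \<and> y \<in> set a"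
  unfolding precedes_def by (metis nth_mem order.strict_trans)

lemma hamiltonian_arc_cycle_of_tournament:
  assumes "k_tournament 3 V A" "ham_cycle V A v b"
  obtains apex where "hamiltonian_arc_cycle (card V) v apex (\<lambda>t. set (b t))"
proof -
  define n where "n = card V"
  from assms(1) have "3 \<le> n"
    and arcs: "\<forall>a\<in>A. distinct a \<and> length a = 3 \<and> set a \<subseteq> V"
    and unique_arc: "\<forall>S. S \<subseteq> V \<and> card S = 3 \<longrightarrow> (\<exists>!a. a \<in> A \<and> set a = S)"
    unfolding k_tournament_def n_def by auto
  from assms(2) have inj_v: "inj_on v {..<n}" and inj_b: "inj_on b {..<n}" and "b ` {..<n} \<subseteq> A"
    and prec: "\<forall>t<n. precedes (v t) (b t) (v (Suc t mod n))"
    unfolding ham_cycle_def Let_def n_def by auto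
  have "\<forall>t\<in>{..<n}. \<exists>z. z \<notin> {v t, v (Suc t mod n)} \<and> set (b t) = {v t, v (Suc t mod n), z}"
  proof
    fix t
    assume "t \<in> {..<n}"
    then have "t < n"
      by simp
    then have "Suc t mod n \<noteq> t" "Suc t mod n < n"
      using \<open>3 \<le> n\<close> by (auto simp: mod_Suc)
    then have "v t \<noteq> v (Suc t mod n)"
      using inj_v \<open>t < n\<close> by (simp add: inj_on_contraD)
    moreover have "card (set (b t)) = 3"
      using arcs \<open>b ` {..<n} \<subseteq> A\<close> \<open>t < n\<close> by (auto simp: distinct_card)
    moreover have "v t \<in> set (b t) \<and> v (Suc t mod n) \<in> set (b t)"
      using prec \<open>t < n\<close> by (intro precedes_mem) simp
    ultimately show "\<exists>z. z \<notin> {v t, v (Suc t mod n)} \<and> set (b t) = {v t, v (Suc t mod n), z}"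
      by (elim card_3_obtain_third) auto
  qed
  from bchoice[OF this] obtain apex where apex: "\<forall>t\<in>{..<n}. apex t \<notin> {v t, v (Suc t mod n)} \<and>
      set (b t) = {v t, v (Suc t mod n), apex t}"
    by blast
  have "inj_on (\<lambda>t. set (b t)) {..<n}"
  proof (rule inj_onI)
    fix s t
    assume st: "s \<in> {..<n}" "t \<in> {..<n}" "set (b s) = set (b t)"
    then have "b s \<in> A" "b t \<in> A"
      using \<open>b ` {..<n} \<subseteq> A\<close> by auto
    then have "set (b s) \<subseteq> V" "card (set (b s)) = 3"
      using arcs by (auto simp: distinct_card)
    then have "b s = b t"
      using unique_arc[rule_format, of "set (b s)"] \<open>b s \<in> A\<close> \<open>b t \<in> A\<close> st(3) by auto
    then show "s = t"
      using inj_b st by (auto dest: inj_onD)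
  qed
  with \<open>3 \<le> n\<close> inj_v apex have "hamiltonian_arc_cycle n v apex (\<lambda>t. set (b t))"
    by unfold_locales auto
  then show thesis
    using that n_def by simp
qed

theorem lemma2:
  fixes V :: "'a set" and A :: "'a list set" and v :: "nat \<Rightarrow> 'a" and b :: "nat \<Rightarrow> 'a list"
  assumes "k_tournament 3 V A" and "ham_cycle V A v b"
  defines "n \<equiv> card V"
  defines "NC \<equiv> nonconsec_pairs n v"
  shows "(\<forall>P\<in>NC. arc_count n b P \<le> 4)
    \<and> (n = 8 \<longrightarrow> card {P\<in>NC. arc_count n b P = 4} \<le> 2)
    \<and> (n = 7 \<longrightarrow>
         card {P\<in>NC. arc_count n b P = 4} \<le> 1
       \<and> card {P\<in>NC. arc_count n b P \<ge> 3} \<le> 2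
       \<and> (\<forall>P\<in>NC. \<forall>Q\<in>NC. arc_count n b P = 4 \<and> arc_count n b Q = 3 \<longrightarrow>
            (\<forall>R\<in>NC - {P, Q}. arc_count n b R \<le> 1)))"
proof -
  obtain apex where "hamiltonian_arc_cycle n v apex (\<lambda>t. set (b t))"
    using hamiltonian_arc_cycle_of_tournament[OF assms(1,2)] n_def by blast
  then interpret hamiltonian_arc_cycle n v apex "\<lambda>t. set (b t)" .
  have count: "arc_count n b P = card (covering_arcs P)" for P
    by (simp add: arc_count_def covering_arcs_def)
  have chord: "chord P" if "P \<in> NC" for P
    using that nonconsec_pair_chord by (simp add: NC_def)
  have "\<forall>P\<in>NC. arc_count n b P \<le> 4"
    using card_covering_arcs_chord_le chord by (simp add: count)
  moreover have "card {P\<in>NC. arc_count n b P = 4} \<le> 2" if "n = 8"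
    unfolding count using that card_full_chords_le_2[of NC] chord by simp
  moreover have "card {P\<in>NC. arc_count n b P = 4} \<le> 1" if "n = 7"
    unfolding count using that card_full_chords_le_1[of NC] chord by simp
  moreover have "card {P\<in>NC. arc_count n b P \<ge> 3} \<le> 2" if "n = 7"
    unfolding count using that card_heavy_chords_le_2[of NC] chord by simp
  moreover have "arc_count n b R \<le> 1"
    if "n = 7" "P \<in> NC" "Q \<in> NC" "R \<in> NC - {P, Q}" "arc_count n b P = 4" "arc_count n b Q = 3"
    for P Q R
    using that full_chord_and_chord_of_three[of P Q R] chord unfolding count by force
  ultimately show ?thesis
    by blast
qed

end
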